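(* For every $n\geq1$, the following hold in the $q$-shuffle algebra $(\mathbb V,\star)$ (polynomials taken with respect to $\star$): (i) $xC_{n-1}y$ is a homogeneous polynomial in $\tilde G_1,\tilde G_2,\ldots,\tilde G_n$ of total degree $n$, where $\tilde G_k$ is given degree $k$ for $1\le k\le n$; (ii) $\tilde G_n$ is a homogeneous polynomial in $xC_0y,xC_1y,\ldots,xC_{n-1}y$ of total degree $n$, where $xC_{k-1}y$ is given degree $k$ for $1\le k\le n$. Here $xC_{k}y$ denotes the free (concatenation) product and $\tilde G_k=xyxy\cdots xy$ is the word consisting of $k$ consecutive copies of $xy$.
   Context: $\mathbb F$ is a field of characteristic zero and $q\in\mathbb F$ is nonzero and not a root of unity; $[n]_q=(q^n-q^{-n})/(q-q^{-1})$. $\mathbb V$ is the free algebra on noncommuting letters $x,y$; a word is a product of letters (the empty word is $1$), and words form a basis. The $q$-shuffle product $\star$ on $\mathbb V$ is the bilinear product with $1\star v=v\star 1=v$ and, for nontrivial words $u=u_1\cdots u_r$, $v=v_1\cdots v_s$ (letters $u_i,v_j$), $u\star v=u_1\bigl((u_2\cdots u_r)\star v\bigr)+v_1\bigl(u\star(v_2\cdots v_s)\bigr)q^{(u_1,v_1)+(u_2,v_1)+\cdots+(u_r,v_1)}$, where juxtaposition is concatenation and $(x,x)=(y,y)=2$, $(x,y)=(y,x)=-2$. Set $\overline x=1$, $\overline y=-1$. A word $u_1\cdots u_n$ is Catalan if $\overline u_1+\cdots+\overline u_i\ge0$ for $1\le i\le n-1$ and $=0$ for $i=n$. For $n\in\mathbb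 N$, $C_n=\sum u_1u_2\cdots u_{2n}\,[1]_q[1+\overline u_1]_q[1+\overline u_1+\overline u_2]_q\cdots[1+\overline u_1+\cdots+\overline u_{2n}]_q$, summed over all Catalan words of length $2n$ (so $C_0=1$). *)

theory Defs
  imports Main "HOL-Library.Poly_Mapping"
begin

text \<open>Letters x, y; words are lists of letters; the free algebra V over a field
 with coefficients in 'a is represented by finitely supported maps word \<Rightarrow>0 'a
 (a word w is the basis element Poly_Mapping.single w 1).\<close>

datatype letter = X | Y

type_synonym 'a vec = "letter list \<Rightarrow>\<^sub>0 'a"

definition wd :: "letter list \<Rightarrow> 'a::field vec" where
  "wd w = Poly_Mapping.single w 1"

definition scal :: "'a::field \<Rightarrow> 'a vec \<Rightarrow> 'a vec" where
  "scal c f = Poly_Mapping.map (\<lambda>a. c * a) f"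

definition conc :: "'a::field vec \<Rightarrow> 'a vec \<Rightarrow> 'a vec" where
  "conc f g = (\<Sum>u\<in>Poly_Mapping.keys f. \<Sum>v\<in>Poly_Mapping.keys g.
      scal (Poly_Mapping.lookup f u * Poly_Mapping.lookup g v) (wd (u @ v)))"

fun pairing :: "letter \<Rightarrow> letter \<Rightarrow> int" where
  "pairing a b = (if a = b then 2 else -2)"

fun qsh :: "'a::field \<Rightarrow> letter list \<Rightarrow> letter list \<Rightarrow> 'a vec" where
  "qsh q [] v = wd v"
| "qsh q u [] = wd u"
| "qsh q (a # u) (b # v) =
     conc (wd [a]) (qsh q u (b # v))
   + scal (q powi (\<Sum>c\<leftarrow>a # u. pairing c b)) (conc (wd [b]) (qsh q (a # u) v))"

definition star :: "'a::field \<Rightarrow> 'a vec \<Rightarrow> 'a vec \<Rightarrow> 'a vec" where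
  "star q f g = (\<Sum>u\<in>Poly_Mapping.keys f. \<Sum>v\<in>Poly_Mapping.keys g.
      scal (Poly_Mapping.lookup f u * Poly_Mapping.lookup g v) (qsh q u v))"

definition star_list :: "'a::field \<Rightarrow> 'a vec list \<Rightarrow> 'a vec" where
  "star_list q fs = foldr (star q) fs (wd [])"

definition qint :: "'a::field \<Rightarrow> int \<Rightarrow> 'a" where
  "qint q n = (q powi n - q powi (- n)) / (q - inverse q)"

fun bar :: "letter \<Rightarrow> int" where
  "bar X = 1"
| "bar Y = -1"

definition catalan :: "letter list \<Rightarrow> bool" where
  "catalan w = ((\<forall>i. 1 \<le> i \<and> i \<le> length w - 1 \<longrightarrow> sum_list (map bar (take i w)) \<ge> 0)
               \<and> sum_list (map bar w) = 0)"

definition Cat :: "'a::field \<Rightarrow> nat \<Rightarrow> 'a vec" where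
  "Cat q n = (\<Sum>w\<in>{w. length w = 2 * n \<and> catalan w}.
      scal (\<Prod>i\<in>{0..2 * n}. qint q (1 + sum_list (map bar (take i w)))) (wd w))"

definition xCy :: "'a::field \<Rightarrow> nat \<Rightarrow> 'a vec" where
  "xCy q k = conc (wd [X]) (conc (Cat q k) (wd [Y]))"

definition Gt :: "nat \<Rightarrow> 'a::field vec" where
  "Gt k = wd (concat (replicate k [X, Y]))"

text \<open>Compositions of n: exponent sequences of the (noncommutative) monomials of
 weighted degree n in generators of degrees 1,2,...\<close>
definition compositions :: "nat \<Rightarrow> nat list set" where
  "compositions n = {ks. sum_list ks = n \<and> (\<forall>k\<in>set ks. 0 < k)}"

end

theory Submission
  imports Defs
begin

text \<open>The proof rests on the identity (\<open>Gt_xCy_identity\<close>), for \<open>n \<ge> 1\<close>,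
  \<open>(\<Sum>m<n. ((-q\<^sup>-\<^sup>1)^(n-m) - (-q)^(n-m)) G\<^sub>m \<star> xC\<^bsub>n-m-1\<^esub>y) = n (q - q\<^sup>-\<^sup>1) G\<^sub>n\<close>.
  When \<open>q\<close> is not a root of unity, the coefficient of the term \<open>m = 0\<close> and the coefficient on the
  right are nonzero, so the identity expresses \<open>xC\<^bsub>n-1\<^esub>y\<close> through \<open>G\<^sub>n\<close> and products of lower terms,
  and vice versa; induction on \<open>n\<close> gives both parts.

  The identity is verified coefficientwise, by induction on words. Deleting a leading letter \<open>a\<close>
  is a twisted derivation of \<open>\<star>\<close>. The element \<open>\<lambda>\<^sup>k xC\<^bsub>k-1\<^esub>y\<close> is a sum over Dyck excursions weighted by
  \<open>q\<close>-integers of heights, so its derivatives are again such path sums. For \<open>\<lambda> = -q\<close> and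
  \<open>\<lambda> = -q\<^sup>-\<^sup>1\<close>, the products of alternating words with these path sums satisfy a system of
  relations that is closed under derivatives, and its instance at even length is the identity.\<close>

section \<open>Coefficients, left derivatives and the \<open>q\<close>-shuffle product\<close>

abbreviation coeff :: "'a::field vec \<Rightarrow> letter list \<Rightarrow> 'a" where
  "coeff f w \<equiv> Poly_Mapping.lookup f w"

lemma coeff_scal [simp]: "coeff (scal c f) w = c * coeff f w"
  by (simp add: scal_def map.rep_eq when_def)

lemma coeff_wd: "coeff (wd u) w = (if u = w then 1 else 0)"
  by (simp add: wd_def lookup_single when_def)

lemma keys_wd [simp]: "Poly_Mapping.keys (wd u :: 'a::field vec) = {u}"
  by (simp add: wd_def)

lemma scal_0 [simp]: "scal 0 f = 0"
  by (rule poly_mapping_eqI) simp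

lemma scal_zero [simp]: "scal c 0 = 0"
  by (rule poly_mapping_eqI) simp

lemma scal_1 [simp]: "scal 1 f = f"
  by (rule poly_mapping_eqI) simp

lemma scal_scal [simp]: "scal c (scal d f) = scal (c * d) f"
  by (rule poly_mapping_eqI) simp

lemma scal_add_left: "scal (c + d) f = scal c f + scal d f"
  by (rule poly_mapping_eqI) (simp add: lookup_add distrib_right)

lemma scal_diff_left: "scal (c - d) f = scal c f - scal d f"
  by (rule poly_mapping_eqI) (simp add: lookup_minus left_diff_distrib)

lemma scal_sum: "scal c (\<Sum>i\<in>S. F i) = (\<Sum>i\<in>S. scal c (F i))"
  by (rule poly_mapping_eqI) (simp add: lookup_sum sum_distrib_left)

lemma minus_eq_plus_scal: "f - g = f + scal (-1) (g :: 'a::field vec)"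
  by (rule poly_mapping_eqI) (simp add: lookup_add lookup_minus)

lemma coeff_conc_letter:
  "coeff (conc (wd [a]) f) w = (case w of [] \<Rightarrow> 0 | b # w' \<Rightarrow> if b = a then coeff f w' else 0)"
proof -
  have "coeff (conc (wd [a]) f) w = (\<Sum>v\<in>Poly_Mapping.keys f. coeff f v * (if a # v = w then 1 else 0))"
    by (simp add: conc_def lookup_sum coeff_wd)
  also have "\<dots> = (\<Sum>v\<in>Poly_Mapping.keys f. if a # v = w then coeff f v else 0)"
    by (rule sum.cong) auto
  also have "\<dots> = (case w of [] \<Rightarrow> 0 | b # w' \<Rightarrow> if b = a then coeff f w' else 0)"
    by (auto simp: sum.delta in_keys_iff split: list.split)
  finally show ?thesis .
qed

lemma coeff_conc_letter_right:
  "coeff (conc f (wd [b])) w = (if w \<noteq> [] \<and> last w = b then coeff f (butlast w) else 0)"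
proof -
  have "coeff (conc f (wd [b])) w = (\<Sum>u\<in>Poly_Mapping.keys f. if u @ [b] = w then coeff f u else 0)"
    by (simp add: conc_def lookup_sum coeff_wd if_distrib cong: if_cong)
  also have "\<dots> = (\<Sum>u\<in>Poly_Mapping.keys f. if u = butlast w \<and> w \<noteq> [] \<and> last w = b then coeff f u else 0)"
    by (rule sum.cong) (auto simp: snoc_eq_iff_butlast)
  also have "\<dots> = (if w \<noteq> [] \<and> last w = b then coeff f (butlast w) else 0)"
    by (auto simp: sum.delta in_keys_iff)
  finally show ?thesis .
qed

lemma qsh_Nil_right [simp]: "qsh q u [] = wd u"
  by (cases u) auto

lemma coeff_qsh_Nil: "coeff (qsh q u v) [] = (if u = [] \<and> v = [] then 1 else 0)"
  by (cases u; cases v) (simp_all add: coeff_wd lookup_add coeff_conc_letter del: pairing.simps)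

definition weight :: "letter \<Rightarrow> letter list \<Rightarrow> int" where
  "weight a u = (\<Sum>c\<leftarrow>u. pairing c a)"

lemma weight_Nil [simp]: "weight a [] = 0"
  and weight_Cons [simp]: "weight a (b # u) = pairing b a + weight a u"
  by (simp_all add: weight_def)

definition strip_head :: "letter \<Rightarrow> letter list \<Rightarrow> (letter list \<Rightarrow> 'b::field) \<Rightarrow> 'b" where
  "strip_head a u F = (case u of [] \<Rightarrow> 0 | c # u' \<Rightarrow> if c = a then F u' else 0)"

lemma strip_head_simps [simp]:
  "strip_head a [] F = 0" "strip_head a (c # u) F = (if c = a then F u else 0)"
  by (simp_all add: strip_head_def)

lemma coeff_qsh_Cons: "coeff (qsh q u v) (a # w) =
    strip_head a u (\<lambda>u'. coeff (qsh q u' v) w) + strip_head a v (\<lambda>v'. q powi weight a u * coeff (qsh q u v') w)"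
proof (cases u)
  case Nil
  then show ?thesis by (cases v) (auto simp: coeff_wd)
next
  case (Cons c u')
  then show ?thesis
    by (cases v) (auto simp: coeff_wd lookup_add coeff_conc_letter weight_def simp del: pairing.simps)
qed

declare pairing.simps [simp del]

definition lder :: "letter \<Rightarrow> 'a::field vec \<Rightarrow> 'a vec" where
  "lder a f = Abs_poly_mapping (\<lambda>w. coeff f (a # w))"

lemma coeff_lder [simp]: "coeff (lder a f) w = coeff f (a # w)"
proof -
  have "{w. coeff f (a # w) \<noteq> 0} = Cons a -` Poly_Mapping.keys f"
    by (auto simp: in_keys_iff)
  moreover have "finite (Cons a -` Poly_Mapping.keys f)"
    by (rule finite_vimageI) auto
  ultimately show ?thesis
    by (simp add: lder_def)
qed

definition twist :: "'a::field \<Rightarrow> letter \<Rightarrow> 'a vec \<Rightarrow> 'a vec" where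
  "twist q a f = Abs_poly_mapping (\<lambda>u. q powi weight a u * coeff f u)"

lemma coeff_twist [simp]: "coeff (twist q a f) u = q powi weight a u * coeff f u"
proof -
  have "finite {u. q powi weight a u * coeff f u \<noteq> 0}"
    by (rule finite_subset[OF _ finite_lookup]) auto
  then show ?thesis
    by (simp add: twist_def)
qed

lemma sum_keys_strip_head:
  "(\<Sum>u\<in>Poly_Mapping.keys f. coeff f u * strip_head a u F)
     = (\<Sum>u\<in>Poly_Mapping.keys (lder a f). coeff (lder a f) u * F u)"
proof -
  let ?K = "Poly_Mapping.keys f"
  have "(\<Sum>u\<in>?K. coeff f u * strip_head a u F) = (\<Sum>u\<in>?K \<inter> range (Cons a). coeff f u * F (tl u))"
    by (subst sum.inter_restrict) (auto intro!: sum.cong simp: strip_head_def split: list.split)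
  also have "?K \<inter> range (Cons a) = Cons a ` (Cons a -` ?K)"
    by auto
  also have "(\<Sum>u\<in>Cons a ` (Cons a -` ?K). coeff f u * F (tl u)) = (\<Sum>u\<in>Cons a -` ?K. coeff f (a # u) * F u)"
    by (subst sum.reindex) auto
  also have "Cons a -` ?K = Poly_Mapping.keys (lder a f)"
    by (auto simp: in_keys_iff)
  finally show ?thesis
    by simp
qed

lemma coeff_star: "coeff (star q f g) w =
    (\<Sum>u\<in>Poly_Mapping.keys f. \<Sum>v\<in>Poly_Mapping.keys g. coeff f u * (coeff g v * coeff (qsh q u v) w))"
  by (simp add: star_def lookup_sum mult.assoc)

lemma coeff_star_Nil: "coeff (star q f g) [] = coeff f [] * coeff g []"
proof -
  have "coeff f u * (coeff g v * (if u = [] \<and> v = [] then 1 else 0))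
      = (if v = [] then (if u = [] then coeff f u * coeff g v else 0) else 0)" for u v
    by simp
  then show ?thesis
    by (simp add: coeff_star coeff_qsh_Nil sum.delta in_keys_iff sum.If_cases)
qed

lemma strip_head_mult: "c * strip_head a u F = strip_head a u (\<lambda>x. c * F x)"
  by (cases u) simp_all

lemma strip_head_sum: "strip_head a u (\<lambda>x. \<Sum>v\<in>S. G v x) = (\<Sum>v\<in>S. strip_head a u (G v))"
  by (cases u) simp_all

lemma coeff_star_Cons:
  "coeff (star q f g) (a # w) = coeff (star q (lder a f) g) w + coeff (star q (twist q a f) (lder a g)) w"
proof -
  let ?Kf = "Poly_Mapping.keys f" and ?Kg = "Poly_Mapping.keys g"
  have "coeff (star q f g) (a # w) =
     (\<Sum>u\<in>?Kf. coeff f u * strip_head a u (\<lambda>u'. \<Sum>v\<in>?Kg. coeff g v * coeff (qsh q u' v) w)) +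
     (\<Sum>u\<in>?Kf. coeff (twist q a f) u * (\<Sum>v\<in>?Kg. coeff g v * strip_head a v (\<lambda>v'. coeff (qsh q u v') w)))"
    by (simp add: coeff_star coeff_qsh_Cons distrib_left sum.distrib sum_distrib_left
        strip_head_sum strip_head_mult mult_ac)
  also have "(\<Sum>u\<in>?Kf. coeff (twist q a f) u * (\<Sum>v\<in>?Kg. coeff g v * strip_head a v (\<lambda>v'. coeff (qsh q u v') w)))
     = (\<Sum>u\<in>Poly_Mapping.keys (twist q a f). coeff (twist q a f) u
          * (\<Sum>v\<in>Poly_Mapping.keys (lder a g). coeff (lder a g) v * coeff (qsh q u v) w))"
    unfolding sum_keys_strip_head
    by (rule sum.mono_neutral_right) (auto simp: in_keys_iff)
  finally show ?thesis
    by (simp add: sum_keys_strip_head coeff_star sum_distrib_left)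
qed

lemma lder_add [simp]: "lder a (f + g) = lder a f + lder a g"
  by (rule poly_mapping_eqI) (simp add: lookup_add)

lemma lder_scal [simp]: "lder a (scal c f) = scal c (lder a f)"
  by (rule poly_mapping_eqI) simp

lemma lder_zero [simp]: "lder a 0 = 0"
  by (rule poly_mapping_eqI) simp

lemma lder_sum: "lder a (\<Sum>i\<in>S. F i) = (\<Sum>i\<in>S. lder a (F i))"
  by (rule poly_mapping_eqI) (simp add: lookup_sum)

lemma lder_wd_Nil [simp]: "lder a (wd []) = 0"
  by (rule poly_mapping_eqI) (simp add: coeff_wd)

lemma lder_wd_Cons: "lder a (wd (b # u)) = (if a = b then wd u else 0)"
  by (rule poly_mapping_eqI) (simp add: coeff_wd)

lemma twist_add [simp]: "twist q a (f + g) = twist q a f + twist q a g"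
  by (rule poly_mapping_eqI) (simp add: lookup_add distrib_left)

lemma twist_scal [simp]: "twist q a (scal c f) = scal c (twist q a f)"
  by (rule poly_mapping_eqI) (simp add: mult_ac)

lemma twist_zero [simp]: "twist q a 0 = 0"
  by (rule poly_mapping_eqI) simp

lemma twist_wd: "twist q a (wd u) = scal (q powi weight a u) (wd u)"
  by (rule poly_mapping_eqI) (simp add: coeff_wd)

lemma twist_twist: "twist q a (twist q b f) = twist q b (twist q a f)"
  by (rule poly_mapping_eqI) (simp add: mult_ac)

lemma lder_twist: "q \<noteq> 0 \<Longrightarrow> lder b (twist q a f) = scal (q powi pairing b a) (twist q a (lder b f))"
  by (rule poly_mapping_eqI) (simp add: power_int_add mult_ac)

lemma lder_star: "lder a (star q f g) = star q (lder a f) g + star q (twist q a f) (lder a g)"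
  by (rule poly_mapping_eqI) (simp add: coeff_star_Cons lookup_add)

lemma star_add_left: "star q (f + g) h = star q f h + star q g h"
proof (rule poly_mapping_eqI)
  fix w
  show "coeff (star q (f + g) h) w = coeff (star q f h + star q g h) w"
    by (induction w arbitrary: f g h)
      (simp_all add: coeff_star_Nil coeff_star_Cons lookup_add distrib_right)
qed

lemma star_add_right: "star q f (g + h) = star q f g + star q f h"
proof (rule poly_mapping_eqI)
  fix w
  show "coeff (star q f (g + h)) w = coeff (star q f g + star q f h) w"
    by (induction w arbitrary: f g h)
      (simp_all add: coeff_star_Nil coeff_star_Cons lookup_add distrib_left)
qed

lemma star_scal_left: "star q (scal c f) g = scal c (star q f g)"
proof (rule poly_mapping_eqI)
  fix w
  show "coeff (star q (scal c f) g) w = coeff (scal c (star q f g)) w"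
    by (induction w arbitrary: f g) (simp_all add: coeff_star_Nil coeff_star_Cons distrib_left)
qed

lemma star_scal_right: "star q f (scal c g) = scal c (star q f g)"
proof (rule poly_mapping_eqI)
  fix w
  show "coeff (star q f (scal c g)) w = coeff (scal c (star q f g)) w"
    by (induction w arbitrary: f g) (simp_all add: coeff_star_Nil coeff_star_Cons distrib_left)
qed

lemma star_zero_left [simp]: "star q 0 g = 0"
  using star_scal_left[of q 0 0 g] by simp

lemma star_zero_right [simp]: "star q f 0 = 0"
  using star_scal_right[of q f 0 0] by simp

lemma star_sum_left: "finite S \<Longrightarrow> star q (\<Sum>i\<in>S. F i) g = (\<Sum>i\<in>S. star q (F i) g)"
  by (induction S rule: finite_induct) (simp_all add: star_add_left)

lemma star_sum_right: "finite S \<Longrightarrow> star q f (\<Sum>i\<in>S. F i) = (\<Sum>i\<in>S. star q f (F i))"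
  by (induction S rule: finite_induct) (simp_all add: star_add_right)

lemma star_one_left [simp]: "star q (wd []) f = f"
proof (rule poly_mapping_eqI)
  fix w
  show "coeff (star q (wd []) f) w = coeff f w"
    by (induction w arbitrary: f) (simp_all add: coeff_star_Nil coeff_star_Cons coeff_wd twist_wd)
qed

lemma star_one_right [simp]: "star q f (wd []) = f"
proof (rule poly_mapping_eqI)
  fix w
  show "coeff (star q f (wd [])) w = coeff f w"
    by (induction w arbitrary: f) (simp_all add: coeff_star_Nil coeff_star_Cons coeff_wd)
qed

lemma twist_star:
  assumes "q \<noteq> 0"
  shows "twist q a (star q f g) = star q (twist q a f) (twist q a g)"
proof (rule poly_mapping_eqI)
  fix w
  show "coeff (twist q a (star q f g)) w = coeff (star q (twist q a f) (twist q a g)) w"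
  proof (induction w arbitrary: f g)
    case Nil
    then show ?case
      by (simp add: coeff_star_Nil)
  next
    case (Cons b w)
    have "coeff (star q (twist q a f) (twist q a g)) (b # w)
        = q powi pairing b a * coeff (twist q a (star q (lder b f) g)) w
          + q powi pairing b a * coeff (twist q a (star q (twist q b f) (lder b g))) w"
      by (simp add: coeff_star_Cons lder_twist[OF assms] star_scal_left star_scal_right twist_twist
          del: coeff_twist flip: Cons.IH)
    also have "\<dots> = coeff (twist q a (star q f g)) (b # w)"
      by (simp add: coeff_star_Cons power_int_add assms distrib_left mult_ac)
    finally show ?case ..
  qed
qed

lemma star_assoc: "q \<noteq> 0 \<Longrightarrow> star q (star q f g) h = star q f (star q g h)"
proof (rule poly_mapping_eqI)
  fix w
  assume "q \<noteq> 0"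
  then show "coeff (star q (star q f g) h) w = coeff (star q f (star q g h)) w"
    by (induction w arbitrary: f g h)
      (simp_all add: coeff_star_Nil coeff_star_Cons lder_star twist_star star_add_left star_add_right
        lookup_add)
qed

lemma finite_words_of_length: "finite {w :: letter list. length w = L}"
proof -
  have "finite (UNIV :: letter set)"
    using letter.exhaust by (metis finite.simps insertCI UNIV_eq_I)
  then show ?thesis
    using finite_lists_length_eq[of UNIV L] by simp
qed

definition hvec :: "(letter list \<Rightarrow> 'a::field) \<Rightarrow> nat \<Rightarrow> 'a vec" where
  "hvec f L = (\<Sum>w\<in>{w. length w = L}. scal (f w) (wd w))"

lemma coeff_hvec: "coeff (hvec f L) u = (if length u = L then f u else 0)"
proof -
  have "coeff (hvec f L) u = (\<Sum>w\<in>{w. length w = L}. if w = u then f w else 0)"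
    by (auto simp: hvec_def lookup_sum coeff_wd intro!: sum.cong)
  then show ?thesis
    using finite_words_of_length by (simp add: sum.delta')
qed

lemma lder_hvec_Suc: "lder a (hvec f (Suc L)) = hvec (\<lambda>w. f (a # w)) L"
  by (rule poly_mapping_eqI) (simp add: coeff_hvec)

lemma hvec_scal: "hvec (\<lambda>w. c * f w) L = scal c (hvec f L)"
  by (rule poly_mapping_eqI) (simp add: coeff_hvec)

text \<open>\<open>alt_word L\<close> is the alternating word of length \<open>L\<close> ending in \<open>Y\<close>; the flag \<open>p\<close> of
  \<open>alt p L\<close> selects the parity of \<open>L\<close>, i.e. whether the word starts with \<open>Y\<close>.\<close>

fun alt_word :: "nat \<Rightarrow> letter list" where
  "alt_word 0 = []"
| "alt_word (Suc L) = (if even L then Y else X) # alt_word L"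

definition alt :: "bool \<Rightarrow> nat \<Rightarrow> 'a::field vec" where
  "alt p L = (if odd L = p then wd (alt_word L) else 0)"

lemma alt_word_double: "alt_word (2 * m) = concat (replicate m [X, Y])"
  by (induction m) simp_all

lemma alt_False_double: "alt False (2 * m) = Gt m"
  by (simp add: alt_def Gt_def alt_word_double)

lemma weight_alt_word: "weight a (alt_word L) = (if odd L then pairing Y a else 0)"
  by (induction L) (cases a; auto simp: pairing.simps)+

lemma twist_alt:
  "twist q a (alt False L) = alt False L"
  "twist q a (alt True L) = scal (q powi pairing Y a) (alt True L)"
  by (simp_all add: alt_def twist_wd weight_alt_word)

lemma lder_alt:
  "lder X (alt False (Suc L)) = alt True L"
  "lder Y (alt True (Suc L)) = alt False L"
  "lder Y (alt False L) = 0"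
  "lder X (alt True L) = 0"
  "lder a (alt p 0) = 0"
  by (cases L; simp add: alt_def lder_wd_Cons)+

lemma coeff_alt_Nil: "coeff (alt p L) [] = (if L = 0 \<and> \<not> p then 1 else 0)"
  by (cases L) (simp_all add: alt_def coeff_wd)

text \<open>The factor \<open>(L + 1) div 2\<close> counts the letters \<open>Y\<close> of the word; it produces the factor \<open>n\<close>
  of the key identity.\<close>

definition alt_scaled :: "bool \<Rightarrow> nat \<Rightarrow> 'a::field vec" where
  "alt_scaled p L = scal (of_nat ((L + 1) div 2)) (alt p L)"

lemma lder_alt_scaled:
  "lder X (alt_scaled False (Suc L)) = alt_scaled True L"
  "lder Y (alt_scaled True (Suc L)) = alt_scaled False L + alt False L"
  "lder Y (alt_scaled False L) = 0"
  "lder X (alt_scaled True L) = 0"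
  "lder a (alt_scaled p 0) = 0"
proof -
  have "(L + 2) div 2 = (L + 1) div 2" if "odd L"
    using that by presburger
  then show "lder X (alt_scaled False (Suc L)) = alt_scaled True L"
    by (simp add: alt_scaled_def lder_alt) (simp add: alt_def)
  have "(L + 2) div 2 = (L + 1) div 2 + 1" if "even L"
    using that by presburger
  then show "lder Y (alt_scaled True (Suc L)) = alt_scaled False L + alt False L"
    by (simp add: alt_scaled_def lder_alt) (simp add: alt_def scal_add_left)
qed (simp_all add: alt_scaled_def lder_alt)

lemma coeff_alt_scaled_Nil: "coeff (alt_scaled p L) [] = 0"
  by (simp add: alt_scaled_def coeff_alt_Nil)

section \<open>Weighted Dyck paths\<close>

definition qnat :: "'a::field \<Rightarrow> nat \<Rightarrow> 'a" where
  "qnat q n = qint q (int n)"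

lemma qnat_eq: "qnat q n = (q ^ n - inverse q ^ n) / (q - inverse q)"
  by (simp add: qnat_def qint_def power_int_minus power_inverse)

lemma qnat_1: "q - inverse q \<noteq> 0 \<Longrightarrow> qnat q 1 = 1"
  by (simp add: qnat_eq)

lemma qint_1: "q - inverse q \<noteq> 0 \<Longrightarrow> qint q 1 = 1"
  by (simp add: qint_def)

lemma qnat_Suc:
  assumes "q \<noteq> 0" "q - inverse q \<noteq> 0"
  shows "qnat q (Suc n) = inverse q * qnat q n + q ^ n"
    and "qnat q (Suc n) = q * qnat q n + inverse q ^ n"
proof -
  have "q ^ Suc n - inverse q ^ Suc n = inverse q * (q ^ n - inverse q ^ n) + q ^ n * (q - inverse q)"
    and "q ^ Suc n - inverse q ^ Suc n = q * (q ^ n - inverse q ^ n) + inverse q ^ n * (q - inverse q)"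
    using assms(1) by (simp_all add: algebra_simps)
  then show "qnat q (Suc n) = inverse q * qnat q n + q ^ n"
    and "qnat q (Suc n) = q * qnat q n + inverse q ^ n"
    using assms unfolding qnat_eq by (simp_all add: field_simps)
qed

text \<open>\<open>path_weight q lam h w\<close> weighs \<open>w\<close>, read as a lattice path from height \<open>h\<close> that first reaches
  height \<open>0\<close> at its last step: every step except the last contributes the \<open>q\<close>-number of the height
  it reaches, and every \<open>X\<close> step also contributes \<open>lam\<close>.\<close>

fun path_weight :: "'a::field \<Rightarrow> 'a \<Rightarrow> nat \<Rightarrow> letter list \<Rightarrow> 'a" where
  "path_weight q lam h [] = (if h = 0 then 1 else 0)"
| "path_weight q lam h (X # w) = (if h = 0 then 0 else lam * qnat q (Suc h) * path_weight q lam (Suc h) w)"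
| "path_weight q lam h (Y # w) = (if h = 0 then 0 else if h = 1 then (if w = [] then 1 else 0)
     else qnat q (h - 1) * path_weight q lam (h - 1) w)"

fun excursion_weight :: "'a::field \<Rightarrow> 'a \<Rightarrow> letter list \<Rightarrow> 'a" where
  "excursion_weight q lam (X # w) = lam * path_weight q lam 1 w"
| "excursion_weight q lam _ = 0"

definition paths :: "'a::field \<Rightarrow> 'a \<Rightarrow> nat \<Rightarrow> nat \<Rightarrow> 'a vec" where
  "paths q lam h L = hvec (path_weight q lam h) L"

definition excursions :: "'a::field \<Rightarrow> 'a \<Rightarrow> nat \<Rightarrow> 'a vec" where
  "excursions q lam L = hvec (excursion_weight q lam) L"

lemma path_weight_0: "path_weight q lam 0 w = (if w = [] then 1 else 0)"
proof (cases w)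
  case (Cons a w')
  then show ?thesis
    by (cases a) simp_all
qed simp

lemma paths_0: "paths q lam 0 L = (if L = 0 then wd [] else 0)"
  by (rule poly_mapping_eqI) (auto simp: paths_def coeff_hvec path_weight_0 coeff_wd)

lemma lder_paths:
  "lder X (paths q lam h (Suc L)) = (if h = 0 then 0 else scal (lam * qnat q (Suc h)) (paths q lam (Suc h) L))"
  "lder Y (paths q lam h (Suc L)) = (if h = 0 then 0 else if h = 1 then paths q lam 0 L
       else scal (qnat q (h - 1)) (paths q lam (h - 1) L))"
  "lder a (paths q lam h 0) = 0"
  by (auto simp: paths_def lder_hvec_Suc hvec_scal[symmetric] path_weight_0
      intro!: poly_mapping_eqI simp: coeff_hvec)

lemma coeff_paths_Nil: "coeff (paths q lam h L) [] = (if L = 0 \<and> h = 0 then 1 else 0)"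
  by (simp add: paths_def coeff_hvec)

lemma lder_excursions:
  "lder X (excursions q lam (Suc L)) = scal lam (paths q lam 1 L)"
  "lder Y (excursions q lam L) = 0"
  "lder a (excursions q lam 0) = 0"
  by (cases L; auto simp: excursions_def paths_def lder_hvec_Suc hvec_scal[symmetric]
      intro!: poly_mapping_eqI simp: coeff_hvec)+

lemma coeff_excursions_Nil: "coeff (excursions q lam L) [] = 0"
  by (simp add: excursions_def coeff_hvec)

lemma excursions_0: "excursions q lam 0 = 0"
  by (rule poly_mapping_eqI) (simp add: excursions_def coeff_hvec)

definition height :: "nat \<Rightarrow> letter list \<Rightarrow> int" where
  "height i c = sum_list (map bar (take i c))"

lemma height_0 [simp]: "height 0 c = 0"
  and height_Suc_Cons [simp]: "height (Suc i) (a # c) = bar a + height i c"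
  by (simp_all add: height_def)

lemma height_length: "height (length c) c = 2 * int (count_list c X) - int (length c)"
proof (induction c)
  case (Cons a c)
  then show ?case
    by (cases a) auto
qed simp

lemma catalan_iff_height: "catalan c \<longleftrightarrow> (\<forall>i\<le>length c. 0 \<le> height i c) \<and> height (length c) c = 0"
proof
  assume c: "catalan c"
  then have total: "height (length c) c = 0"
    by (simp add: catalan_def height_def)
  moreover have "0 \<le> height i c" if "i \<le> length c" for i
  proof (cases "i = 0 \<or> i = length c")
    case False
    with that have "1 \<le> i \<and> i \<le> length c - 1"
      by auto
    with c show ?thesis
      by (simp add: catalan_def height_def)
  qed (use total in auto)
  ultimately show "(\<forall>i\<le>length c. 0 \<le> height i c) \<and> height (length c) c = 0"
    by blast
qed (auto simp: catalan_def height_def)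

lemma all_le_Suc_iff: "(\<forall>i\<le>Suc n. P i) \<longleftrightarrow> P 0 \<and> (\<forall>i\<le>n. P (Suc i))"
  by (metis Suc_le_mono le0 not0_implies_Suc)

lemma path_weight_snoc_Y:
  "path_weight q lam (Suc h) (c @ [Y]) =
    (if (\<forall>i\<le>length c. 0 \<le> int h + height i c) \<and> int h + height (length c) c = 0
     then lam ^ count_list c X * (\<Prod>i<length c. qint q (1 + int h + height (Suc i) c)) else 0)"
proof (induction c arbitrary: h)
  case Nil
  then show ?case
    by (cases h) auto
next
  case (Cons a c)
  let ?P = "\<lambda>h c. (\<forall>i\<le>length c. 0 \<le> int h + height i c) \<and> int h + height (length c) c = 0"
  let ?W = "\<lambda>h c. \<Prod>i<length c. qint q (1 + int h + height (Suc i) c)"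
  show ?case
  proof (cases a)
    case X
    have P: "?P h (X # c) \<longleftrightarrow> ?P (Suc h) c"
      by (simp add: all_le_Suc_iff algebra_simps)
    have W: "?W h (X # c) = qnat q (Suc (Suc h)) * ?W (Suc h) c"
      by (simp only: length_Cons prod.lessThan_Suc_shift) (simp add: qnat_def algebra_simps)
    have "path_weight q lam (Suc h) ((X # c) @ [Y])
        = lam * qnat q (Suc (Suc h)) * path_weight q lam (Suc (Suc h)) (c @ [Y])"
      by simp
    also have "\<dots> = (if ?P h (X # c) then lam ^ count_list (X # c) X * ?W h (X # c) else 0)"
      unfolding Cons.IH P W by (auto simp: mult_ac)
    finally show ?thesis
      by (simp only: X)
  next
    case Y
    show ?thesis
    proof (cases h)
      case 0
      then show ?thesis
        by (auto simp: Y all_le_Suc_iff)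
    next
      case (Suc h')
      have P: "?P h (Y # c) \<longleftrightarrow> ?P h' c"
        by (simp add: Suc all_le_Suc_iff algebra_simps)
      have W: "?W h (Y # c) = qnat q (Suc h') * ?W h' c"
        by (simp only: length_Cons prod.lessThan_Suc_shift) (simp add: qnat_def Suc algebra_simps)
      have "path_weight q lam (Suc h) ((Y # c) @ [Y]) = qnat q (Suc h') * path_weight q lam (Suc h') (c @ [Y])"
        by (simp add: Suc)
      also have "\<dots> = (if ?P h (Y # c) then lam ^ count_list (Y # c) X * ?W h (Y # c) else 0)"
        unfolding Cons.IH P W by (auto simp: mult_ac)
      finally show ?thesis
        by (simp only: Y)
    qed
  qed
qed

lemma path_weight_nonzero_snoc_Y:
  "path_weight q lam (Suc h) w \<noteq> 0 \<Longrightarrow> \<exists>c. w = c @ [Y]"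
proof (induction w arbitrary: h)
  case (Cons a w)
  show ?case
  proof (cases a)
    case X
    with Cons.prems have "path_weight q lam (Suc (Suc h)) w \<noteq> 0"
      by simp
    with X Cons.IH show ?thesis
      by (metis append_Cons)
  next
    case Y
    show ?thesis
    proof (cases "w = []")
      case False
      with Cons.prems Y have "h \<noteq> 0" "path_weight q lam (Suc (h - 1)) w \<noteq> 0"
        by (auto split: if_splits)
      with Y Cons.IH show ?thesis
        by (metis append_Cons)
    qed (simp add: Y)
  qed
qed simp

lemma coeff_Cat: "coeff (Cat q n) c = (if length c = 2 * n \<and> catalan c
    then (\<Prod>i\<in>{0..2 * n}. qint q (1 + height i c)) else 0)"
proof -
  have "finite {w. length w = 2 * n \<and> catalan w}"
    by (rule finite_subset[OF _ finite_words_of_length[of "2 * n"]]) auto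
  moreover have "coeff (Cat q n) c = (\<Sum>w\<in>{w. length w = 2 * n \<and> catalan w}.
      if w = c then (\<Prod>i\<in>{0..2 * n}. qint q (1 + height i w)) else 0)"
    by (auto simp: Cat_def lookup_sum coeff_wd height_def intro!: sum.cong)
  ultimately show ?thesis
    by (simp add: sum.delta')
qed

lemma coeff_xCy_snoc: "coeff (xCy q k) (X # c @ [Y]) = coeff (Cat q k) c"
  by (simp add: xCy_def coeff_conc_letter coeff_conc_letter_right)

lemma coeff_xCy_eq_0: "\<nexists>c. w = X # c @ [Y] \<Longrightarrow> coeff (xCy q k) w = 0"
  by (auto simp: xCy_def coeff_conc_letter coeff_conc_letter_right split: list.split)
    (metis append_butlast_last_id)

lemma excursion_weight_snoc:
  assumes "q - inverse q \<noteq> 0"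
  shows "excursion_weight q lam (X # c @ [Y]) = lam ^ Suc (length c div 2) * coeff (Cat q (length c div 2)) c"
proof (cases "catalan c")
  case True
  then have "height (length c) c = 0"
    by (simp add: catalan_iff_height)
  then have n: "length c = 2 * (length c div 2)" "count_list c X = length c div 2"
    using height_length[of c] by presburger+
  have "(\<Prod>i\<in>{0..2 * (length c div 2)}. qint q (1 + height i c))
      = (\<Prod>i<Suc (length c). qint q (1 + height i c))"
    by (metis n(1) atLeast0AtMost lessThan_Suc_atMost)
  also have "\<dots> = (\<Prod>i<length c. qint q (1 + height (Suc i) c))"
    by (simp only: prod.lessThan_Suc_shift) (simp add: qint_1[OF assms])
  finally show ?thesis
    using True n by (simp add: coeff_Cat path_weight_snoc_Y catalan_iff_height[symmetric])
qed (simp add: coeff_Cat path_weight_snoc_Y catalan_iff_height[symmetric])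

lemma excursion_weight_eq_0:
  assumes "\<nexists>c. w = X # c @ [Y]"
  shows "excursion_weight q lam w = 0"
proof (cases w)
  case (Cons a u)
  with assms show ?thesis
    by (cases a) (auto dest!: path_weight_nonzero_snoc_Y[where h = 0])
qed simp

lemma excursions_double:
  assumes "q - inverse q \<noteq> 0" and "k \<ge> 1"
  shows "excursions q lam (2 * k) = scal (lam ^ k) (xCy q (k - 1))"
proof (rule poly_mapping_eqI)
  fix w
  show "coeff (excursions q lam (2 * k)) w = coeff (scal (lam ^ k) (xCy q (k - 1))) w"
  proof (cases "\<exists>c. w = X # c @ [Y]")
    case True
    then obtain c where w: "w = X # c @ [Y]"
      by blast
    have "length c = 2 * (k - 1) \<longleftrightarrow> length w = 2 * k"
      using assms(2) w by auto
    moreover have "length c = 2 * (k - 1) \<Longrightarrow> Suc (length c div 2) = k"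
      using assms(2) by simp
    ultimately show ?thesis
      using w by (auto simp: excursions_def coeff_hvec coeff_xCy_snoc excursion_weight_snoc[OF assms(1)]
          coeff_Cat simp del: excursion_weight.simps)
  qed (simp add: excursions_def coeff_hvec excursion_weight_eq_0 coeff_xCy_eq_0)
qed

definition conv :: "'a::field \<Rightarrow> (nat \<Rightarrow> 'a vec) \<Rightarrow> (nat \<Rightarrow> 'a vec) \<Rightarrow> nat \<Rightarrow> 'a vec" where
  "conv q f e L = (\<Sum>l\<le>L. star q (f l) (e (L - l)))"

lemma lder_conv_Suc:
  assumes "lder a (f 0) = 0" "lder a (e 0) = 0"
  shows "lder a (conv q f e (Suc L)) = conv q (\<lambda>l. lder a (f (Suc l))) e L
    + conv q (\<lambda>l. twist q a (f l)) (\<lambda>l. lder a (e (Suc l))) L"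
proof -
  have "lder a (conv q f e (Suc L)) = (\<Sum>l\<le>Suc L. star q (lder a (f l)) (e (Suc L - l)))
     + (\<Sum>l\<le>Suc L. star q (twist q a (f l)) (lder a (e (Suc L - l))))"
    by (simp add: conv_def lder_sum lder_star sum.distrib)
  also have "(\<Sum>l\<le>Suc L. star q (lder a (f l)) (e (Suc L - l))) = (\<Sum>l\<le>L. star q (lder a (f (Suc l))) (e (L - l)))"
    by (subst sum.atMost_Suc_shift) (simp add: assms)
  also have "(\<Sum>l\<le>Suc L. star q (twist q a (f l)) (lder a (e (Suc L - l))))
      = (\<Sum>l\<le>L. star q (twist q a (f l)) (lder a (e (Suc (L - l)))))"
    by (simp add: assms Suc_diff_le)
  finally show ?thesis
    by (simp add: conv_def)
qed

lemma lder_conv_0: "lder a (f 0) = 0 \<Longrightarrow> lder a (e 0) = 0 \<Longrightarrow> lder a (conv q f e 0) = 0"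
  by (simp add: conv_def lder_star)

lemma coeff_conv_Nil: "(\<And>l. coeff (e l) [] = 0) \<Longrightarrow> coeff (conv q f e L) [] = 0"
  by (simp add: conv_def lookup_sum coeff_star_Nil)

lemma conv_scal_left: "conv q (\<lambda>l. scal c (f l)) e L = scal c (conv q f e L)"
  by (simp add: conv_def star_scal_left scal_sum)

lemma conv_scal_right: "conv q f (\<lambda>l. scal c (e l)) L = scal c (conv q f e L)"
  by (simp add: conv_def star_scal_right scal_sum)

lemma conv_zero_left [simp]: "conv q (\<lambda>l. 0) e L = 0"
  and conv_zero_right [simp]: "conv q f (\<lambda>l. 0) L = 0"
  by (simp_all add: conv_def)

lemma conv_paths_0: "conv q f (paths q lam 0) L = f L"
  by (simp add: conv_def paths_0 if_distrib[of "star q _"] sum.delta' cong: if_cong)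

definition alt_paths :: "'a::field \<Rightarrow> 'a \<Rightarrow> bool \<Rightarrow> nat \<Rightarrow> nat \<Rightarrow> 'a vec" where
  "alt_paths q lam p h L = conv q (alt p) (paths q lam h) L"

definition alt_excursions :: "'a::field \<Rightarrow> 'a \<Rightarrow> bool \<Rightarrow> nat \<Rightarrow> 'a vec" where
  "alt_excursions q lam p L = conv q (alt p) (excursions q lam) L"

lemma lder_alt_paths:
  assumes "h \<ge> 1"
  shows "lder X (alt_paths q lam False h (Suc L))
      = alt_paths q lam True h L + scal (lam * qnat q (Suc h)) (alt_paths q lam False (Suc h) L)"
    and "lder X (alt_paths q lam True h (Suc L))
      = scal (q powi (-2) * lam * qnat q (Suc h)) (alt_paths q lam True (Suc h) L)"
    and "lder Y (alt_paths q lam False h (Suc L))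
      = (if h = 1 then alt False L else scal (qnat q (h - 1)) (alt_paths q lam False (h - 1) L))"
    and "lder Y (alt_paths q lam True h (Suc L)) = alt_paths q lam False h L
      + scal (q powi 2) (if h = 1 then alt True L else scal (qnat q (h - 1)) (alt_paths q lam True (h - 1) L))"
  using assms
  by (simp_all add: alt_paths_def lder_conv_Suc lder_alt lder_paths twist_alt conv_scal_left conv_scal_right
      conv_paths_0 pairing.simps mult.assoc)

lemma lder_alt_excursions:
  "lder X (alt_excursions q lam False (Suc L)) = alt_excursions q lam True L + scal lam (alt_paths q lam False 1 L)"
  "lder X (alt_excursions q lam True (Suc L)) = scal (q powi (-2) * lam) (alt_paths q lam True 1 L)"
  "lder Y (alt_excursions q lam False (Suc L)) = 0"
  "lder Y (alt_excursions q lam True (Suc L)) = alt_excursions q lam False L"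
  by (simp_all add: alt_excursions_def alt_paths_def lder_conv_Suc lder_alt lder_excursions twist_alt
      conv_scal_left conv_scal_right pairing.simps)

lemma lder_alt_paths_0: "lder a (alt_paths q lam p h 0) = 0"
  and lder_alt_excursions_0: "lder a (alt_excursions q lam p 0) = 0"
  by (simp_all add: alt_paths_def alt_excursions_def lder_conv_0 lder_alt lder_paths lder_excursions)

lemma coeff_alt_paths_Nil: "h \<ge> 1 \<Longrightarrow> coeff (alt_paths q lam p h L) [] = 0"
  and coeff_alt_excursions_Nil: "coeff (alt_excursions q lam p L) [] = 0"
  by (simp_all add: alt_paths_def alt_excursions_def coeff_conv_Nil coeff_paths_Nil coeff_excursions_Nil)

section \<open>The key identity\<close>

lemma coeff_alt_paths_Cons:
  assumes "h \<ge> 1"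
  shows "coeff (alt_paths q lam False h (Suc L)) (X # w)
      = coeff (alt_paths q lam True h L) w + lam * qnat q (Suc h) * coeff (alt_paths q lam False (Suc h) L) w"
    and "coeff (alt_paths q lam True h (Suc L)) (X # w)
      = inverse q ^ 2 * lam * qnat q (Suc h) * coeff (alt_paths q lam True (Suc h) L) w"
    and "coeff (alt_paths q lam False h (Suc L)) (Y # w) = (if h = 1 then coeff (alt False L) w
      else qnat q (h - 1) * coeff (alt_paths q lam False (h - 1) L) w)"
    and "coeff (alt_paths q lam True h (Suc L)) (Y # w) = coeff (alt_paths q lam False h L) w
      + q ^ 2 * (if h = 1 then coeff (alt True L) w else qnat q (h - 1) * coeff (alt_paths q lam True (h - 1) L) w)"
  using lder_alt_paths[OF assms, of q lam L, THEN arg_cong[where f = "\<lambda>f. coeff f w"]]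
  by (simp_all add: lookup_add power_int_minus power_inverse mult.assoc)

lemma coeff_alt_excursions_Cons:
  "coeff (alt_excursions q lam False (Suc L)) (X # w)
     = coeff (alt_excursions q lam True L) w + lam * coeff (alt_paths q lam False 1 L) w"
  "coeff (alt_excursions q lam True (Suc L)) (X # w) = inverse q ^ 2 * lam * coeff (alt_paths q lam True 1 L) w"
  "coeff (alt_excursions q lam False (Suc L)) (Y # w) = 0"
  "coeff (alt_excursions q lam True (Suc L)) (Y # w) = coeff (alt_excursions q lam False L) w"
  using lder_alt_excursions[of q lam L, THEN arg_cong[where f = "\<lambda>f. coeff f w"]]
  by (simp_all add: lookup_add power_int_minus power_inverse)

lemma coeff_Cons_degree_0:
  "coeff (alt_paths q lam p h 0) (a # w) = 0"
  "coeff (alt_excursions q lam p 0) (a # w) = 0"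
  "coeff (alt p 0) (a # w) = 0"
  "coeff (alt_scaled p 0) (a # w) = 0"
  using lder_alt_paths_0 lder_alt_excursions_0 lder_alt(5) lder_alt_scaled(5)
  by (metis coeff_lder lookup_zero)+

lemma alt_paths_minus_q:
  fixes q :: "'a::field"
  assumes q: "q \<noteq> 0" "q - inverse q \<noteq> 0"
  shows "alt_paths q (-q) False 1 L = alt True L"
    and "h \<ge> 1 \<Longrightarrow> scal (qnat q h) (alt_paths q (-q) True h L)
           = scal (q ^ h * qnat q (Suc h)) (alt_paths q (-q) False (Suc h) L)"
proof -
  let ?F = "\<lambda>h L. alt_paths q (-q) False h L" and ?T = "\<lambda>h L. alt_paths q (-q) True h L"
  have r: "q * inverse q = 1"
    using q by simp
  note rec = qnat_Suc[OF q] and d1 = qnat_1[OF q(2)]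
  have "\<forall>L. coeff (?F 1 L) w = coeff (alt True L) w
      \<and> (\<forall>h\<ge>1. qnat q h * coeff (?T h L) w = q ^ h * qnat q (Suc h) * coeff (?F (Suc h) L) w)" for w
  proof (induction w)
    case Nil
    show ?case
      by (simp add: coeff_alt_paths_Nil coeff_alt_Nil)
  next
    case (Cons a w)
    have base: "coeff (?F 1 L) w = coeff (alt True L) w"
      and shift: "h \<ge> 1 \<Longrightarrow> qnat q h * coeff (?T h L) w = q ^ h * qnat q (Suc h) * coeff (?F (Suc h) L) w"
      for h L using Cons.IH by auto
    show ?case
    proof (intro allI conjI impI)
      fix L
      show "coeff (?F 1 L) (a # w) = coeff (alt True L) (a # w)"
      proof (cases L)
        case (Suc L')
        show ?thesis
        proof (cases a)
          case X
          have "coeff (?F 1 (Suc L')) (X # w) = coeff (?T 1 L') w - q * qnat q 2 * coeff (?F 2 L') w"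
            using coeff_alt_paths_Cons(1)[of 1 q "-q" L' w] by (simp add: numeral_2_eq_2)
          moreover have "coeff (?T 1 L') w = q * qnat q 2 * coeff (?F 2 L') w"
            using shift[of 1 L'] d1 by (simp add: numeral_2_eq_2)
          moreover have "coeff (alt True (Suc L') :: 'a vec) (X # w) = 0"
            by (simp add: lder_alt flip: coeff_lder)
          ultimately show ?thesis
            by (simp add: Suc X)
        next
          case Y
          have "coeff (alt True (Suc L') :: 'a vec) (Y # w) = coeff (alt False L') w"
            by (simp add: lder_alt flip: coeff_lder)
          then show ?thesis
            using coeff_alt_paths_Cons(3)[of 1 q "-q" L' w] by (simp add: Suc Y)
        qed
      qed (simp add: coeff_Cons_degree_0)
    next
      fix L h :: nat
      assume h: "h \<ge> 1"
      show "qnat q h * coeff (?T h L) (a # w) = q ^ h * qnat q (Suc h) * coeff (?F (Suc h) L) (a # w)"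
      proof (cases L)
        case (Suc L')
        show ?thesis
        proof (cases a)
          case X
          \<comment> \<open>naming \<open>q ^ h\<close> makes \<open>algebra\<close> treat it as an atom; it fails on symbolic exponents\<close>
          obtain P where P: "q ^ h = P"
            by blast
          have "coeff (?T h (Suc L')) (X # w) = inverse q ^ 2 * (-q) * qnat q (Suc h) * coeff (?T (Suc h) L') w"
            using coeff_alt_paths_Cons(2)[OF h, of q "-q" L' w] by simp
          moreover have "coeff (?F (Suc h) (Suc L')) (X # w)
              = coeff (?T (Suc h) L') w - q * qnat q (Suc (Suc h)) * coeff (?F (Suc (Suc h)) L') w"
            using coeff_alt_paths_Cons(1)[of "Suc h" q "-q" L' w] by simp
          moreover have "qnat q (Suc h) * coeff (?T (Suc h) L') w
              = q * P * qnat q (Suc (Suc h)) * coeff (?F (Suc (Suc h)) L') w"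
            using shift[of "Suc h" L'] P by simp
          moreover have "qnat q (Suc h) = inverse q * qnat q h + P"
            and "qnat q (Suc (Suc h)) = inverse q * qnat q (Suc h) + q * P"
            using rec(1)[of h] rec(1)[of "Suc h"] P by simp_all
          ultimately show ?thesis
            unfolding Suc X P using r by algebra
        next
          case Y
          show ?thesis
          proof (cases "h = 1")
            case True
            have "coeff (?T 1 (Suc L')) (Y # w) = coeff (?F 1 L') w + q ^ 2 * coeff (alt True L') w"
              using coeff_alt_paths_Cons(4)[of 1 q "-q" L' w] by simp
            moreover have "coeff (?F 2 (Suc L')) (Y # w) = coeff (?F 1 L') w"
              using coeff_alt_paths_Cons(3)[of 2 q "-q" L' w] d1 by simp
            moreover have "qnat q 2 = inverse q + q"
              using rec(1)[of 1] d1 by (simp add: numeral_2_eq_2)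
            ultimately show ?thesis
              unfolding Suc Y True using base[of L'] r d1 by (simp add: numeral_2_eq_2) algebra
          next
            case False
            then obtain k where k: "h = Suc k" "k \<ge> 1"
              using h by (cases h) auto
            obtain P R where P: "q ^ k = P" "inverse q ^ k = R"
              by blast
            have "P * R = 1"
              using P r by (metis power_mult_distrib power_one)
            moreover have "coeff (?T h (Suc L')) (Y # w)
                = coeff (?F h L') w + q ^ 2 * (qnat q k * coeff (?T k L') w)"
              using coeff_alt_paths_Cons(4)[OF h, of q "-q" L' w] False k by simp
            moreover have "coeff (?F (Suc h) (Suc L')) (Y # w) = qnat q h * coeff (?F h L') w"
              using coeff_alt_paths_Cons(3)[of "Suc h" q "-q" L' w] h by simp
            moreover have "qnat q k * coeff (?T k L') w = P * qnat q h * coeff (?F h L') w"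
              using shift[OF k(2), of L'] k P by simp
            moreover have "qnat q (Suc h) = q * qnat q h + inverse q * R"
              using rec(2)[of h] k P by simp
            ultimately show ?thesis
              unfolding Suc Y k(1) power_Suc P using r by algebra
          qed
        qed
      qed (simp add: coeff_Cons_degree_0)
    qed
  qed
  then show "alt_paths q (-q) False 1 L = alt True L"
    and "h \<ge> 1 \<Longrightarrow> scal (qnat q h) (alt_paths q (-q) True h L)
           = scal (q ^ h * qnat q (Suc h)) (alt_paths q (-q) False (Suc h) L)"
    by (auto intro!: poly_mapping_eqI)
qed

lemma alt_paths_mixed:
  fixes q :: "'a::field"
  assumes q: "q \<noteq> 0" "q - inverse q \<noteq> 0" and nz: "\<And>n. n \<ge> 1 \<Longrightarrow> qnat q n \<noteq> 0"
    and "h \<ge> 1"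
  shows "scal (qnat q h) (alt_paths q (- inverse q) True h L)
    = scal ((q ^ h) ^ 2) (alt_paths q (-q) False (Suc h) L)
      + scal (inverse q * q ^ h * qnat q h) (alt_paths q (- inverse q) False (Suc h) L)"
proof -
  let ?F = "\<lambda>h L. alt_paths q (-q) False h L" and ?T = "\<lambda>h L. alt_paths q (-q) True h L"
  let ?F' = "\<lambda>h L. alt_paths q (- inverse q) False h L" and ?T' = "\<lambda>h L. alt_paths q (- inverse q) True h L"
  have r: "q * inverse q = 1"
    using q by simp
  note rec = qnat_Suc[OF q] and d1 = qnat_1[OF q(2)]
  have base: "coeff (?F 1 L) w = coeff (alt True L) w" for L w
    using alt_paths_minus_q(1)[OF q] by simp
  have shift: "qnat q h * coeff (?T h L) w = q ^ h * qnat q (Suc h) * coeff (?F (Suc h) L) w"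
    if "h \<ge> 1" for h L w
    using alt_paths_minus_q(2)[OF q that, of L, THEN arg_cong[where f = "\<lambda>f. coeff f w"]] by simp
  have "\<forall>h\<ge>1. \<forall>L. qnat q h * coeff (?T' h L) w
      = (q ^ h) ^ 2 * coeff (?F (Suc h) L) w + inverse q * q ^ h * qnat q h * coeff (?F' (Suc h) L) w" for w
  proof (induction w)
    case Nil
    show ?case
      by (simp add: coeff_alt_paths_Nil)
  next
    case (Cons a w)
    have mixed: "qnat q h * coeff (?T' h L) w
        = (q ^ h) ^ 2 * coeff (?F (Suc h) L) w + inverse q * q ^ h * qnat q h * coeff (?F' (Suc h) L) w"
      if "h \<ge> 1" for h L using Cons.IH that by auto
    show ?case
    proof (intro allI impI)
      fix h L :: nat
      assume h: "h \<ge> 1"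
      obtain P where P: "q ^ h = P"
        by blast
      show "qnat q h * coeff (?T' h L) (a # w)
        = (q ^ h) ^ 2 * coeff (?F (Suc h) L) (a # w) + inverse q * q ^ h * qnat q h * coeff (?F' (Suc h) L) (a # w)"
      proof (cases L)
        case (Suc L')
        show ?thesis
        proof (cases a)
          case X
          have "coeff (?T' h (Suc L')) (X # w)
              = inverse q ^ 2 * (- inverse q) * qnat q (Suc h) * coeff (?T' (Suc h) L') w"
            using coeff_alt_paths_Cons(2)[OF h, of q "- inverse q" L' w] by simp
          moreover have "coeff (?F (Suc h) (Suc L')) (X # w)
              = coeff (?T (Suc h) L') w - q * qnat q (Suc (Suc h)) * coeff (?F (Suc (Suc h)) L') w"
            using coeff_alt_paths_Cons(1)[of "Suc h" q "-q" L' w] by simp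
          moreover have "coeff (?F' (Suc h) (Suc L')) (X # w)
              = coeff (?T' (Suc h) L') w - inverse q * qnat q (Suc (Suc h)) * coeff (?F' (Suc (Suc h)) L') w"
            using coeff_alt_paths_Cons(1)[of "Suc h" q "- inverse q" L' w] by simp
          moreover have "qnat q (Suc h) * coeff (?T (Suc h) L') w
              = q * P * qnat q (Suc (Suc h)) * coeff (?F (Suc (Suc h)) L') w"
            using shift[of "Suc h" L' w] P by simp
          moreover have "qnat q (Suc h) * coeff (?T' (Suc h) L') w
              = (q * P) ^ 2 * coeff (?F (Suc (Suc h)) L') w
                + inverse q * (q * P) * qnat q (Suc h) * coeff (?F' (Suc (Suc h)) L') w"
            using mixed[of "Suc h" L'] P by simp
          moreover have "qnat q (Suc h) = inverse q * qnat q h + P"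
            and "qnat q (Suc (Suc h)) = inverse q * qnat q (Suc h) + q * P"
            using rec(1)[of h] rec(1)[of "Suc h"] P by simp_all
          ultimately have "qnat q (Suc h) * (qnat q h * coeff (?T' h L) (a # w))
              = qnat q (Suc h) * ((q ^ h) ^ 2 * coeff (?F (Suc h) L) (a # w)
                  + inverse q * q ^ h * qnat q h * coeff (?F' (Suc h) L) (a # w))"
            unfolding Suc X P using r by algebra
          then show ?thesis
            using nz[of "Suc h"] by simp
        next
          case Y
          show ?thesis
          proof (cases "h = 1")
            case True
            have "coeff (?T' 1 (Suc L')) (Y # w) = coeff (?F' 1 L') w + q ^ 2 * coeff (alt True L') w"
              using coeff_alt_paths_Cons(4)[of 1 q "- inverse q" L' w] by simp
            moreover have "coeff (?F 2 (Suc L')) (Y # w) = coeff (?F 1 L') w"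
              and "coeff (?F' 2 (Suc L')) (Y # w) = coeff (?F' 1 L') w"
              using coeff_alt_paths_Cons(3)[of 2 q _ L' w] d1 by simp_all
            ultimately show ?thesis
              unfolding Suc Y True using base[of L' w] d1 r by (simp add: numeral_2_eq_2 algebra_simps)
          next
            case False
            then obtain j where j: "h = Suc (Suc j)"
              using h by (cases h; cases "h - 1") auto
            obtain P' R where P': "q ^ Suc j = P'" "inverse q ^ Suc j = R"
              by blast
            have "P' * R = 1"
              using P' r by (metis power_mult_distrib power_one)
            moreover have "P = q * P'"
              using P P' j by auto
            moreover have "coeff (?T' h (Suc L')) (Y # w)
                = coeff (?F' h L') w + q ^ 2 * (qnat q (Suc j) * coeff (?T' (Suc j) L') w)"
              using coeff_alt_paths_Cons(4)[OF h, of q "- inverse q" L' w] j by simp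
            moreover have "coeff (?F (Suc h) (Suc L')) (Y # w) = qnat q h * coeff (?F h L') w"
              and "coeff (?F' (Suc h) (Suc L')) (Y # w) = qnat q h * coeff (?F' h L') w"
              using coeff_alt_paths_Cons(3)[of "Suc h" q _ L' w] h by simp_all
            moreover have "qnat q (Suc j) * coeff (?T' (Suc j) L') w
                = P' ^ 2 * coeff (?F h L') w + inverse q * P' * qnat q (Suc j) * coeff (?F' h L') w"
              using mixed[of "Suc j" L'] j P' by simp
            moreover have "qnat q h = q * qnat q (Suc j) + R"
              using rec(2)[of "Suc j"] j P' by simp
            ultimately show ?thesis
              unfolding Suc Y P using r by algebra
          qed
        qed
      qed (simp add: coeff_Cons_degree_0)
    qed
  qed
  with assms(4) show ?thesis
    by (auto intro!: poly_mapping_eqI simp: lookup_add)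
qed

lemma coeff_alt_scaled_Cons:
  "coeff (alt_scaled False (Suc L)) (X # w) = coeff (alt_scaled True L) w"
  "coeff (alt_scaled True (Suc L)) (Y # w) = coeff (alt_scaled False L) w + coeff (alt False L) w"
  "coeff (alt_scaled False L) (Y # w) = 0"
  "coeff (alt_scaled True L) (X # w) = 0"
  by (simp_all add: lder_alt_scaled lookup_add flip: coeff_lder)

lemma alt_excursions_difference:
  fixes q :: "'a::field"
  assumes q: "q \<noteq> 0" "q - inverse q \<noteq> 0" and nz: "\<And>n. n \<ge> 1 \<Longrightarrow> qnat q n \<noteq> 0"
  shows "alt_excursions q (- inverse q) False L - alt_excursions q (-q) False L
      = scal (q - inverse q) (alt_scaled False L)"
proof -
  let ?F = "\<lambda>h L. alt_paths q (-q) False h L" and ?T = "\<lambda>h L. alt_paths q (-q) True h L"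
  let ?F' = "\<lambda>h L. alt_paths q (- inverse q) False h L" and ?T' = "\<lambda>h L. alt_paths q (- inverse q) True h L"
  let ?S = "\<lambda>p L. alt_excursions q (-q) p L" and ?S' = "\<lambda>p L. alt_excursions q (- inverse q) p L"
  let ?N = "\<lambda>p L. alt_scaled p L :: 'a vec"
  have r: "q * inverse q = 1"
    using q by simp
  have shift1: "coeff (?T 1 L) w = q * qnat q 2 * coeff (?F 2 L) w" for L w
    using alt_paths_minus_q(2)[OF q order_refl, of L, THEN arg_cong[where f = "\<lambda>f. coeff f w"]] qnat_1[OF q(2)]
    by (simp add: numeral_2_eq_2)
  have mixed1: "coeff (?T' 1 L) w = q ^ 2 * coeff (?F 2 L) w + coeff (?F' 2 L) w" for L w
    using alt_paths_mixed[OF q nz order_refl, of L, THEN arg_cong[where f = "\<lambda>f. coeff f w"]] qnat_1[OF q(2)]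
    by (simp add: lookup_add numeral_2_eq_2 q(1))
  have d2: "qnat q 2 = inverse q + q"
    using qnat_Suc(1)[OF q, of 1] qnat_1[OF q(2)] by (simp add: numeral_2_eq_2)
  have "\<forall>L. coeff (?S' True L) w - coeff (?S True L) w - inverse q * coeff (?F' 1 L) w + q * coeff (?F 1 L) w
        = (q - inverse q) * coeff (?N True L) w
      \<and> coeff (?S' False L) w - coeff (?S False L) w = (q - inverse q) * coeff (?N False L) w" for w
  proof (induction w)
    case Nil
    show ?case
      by (simp add: coeff_alt_excursions_Nil coeff_alt_paths_Nil coeff_alt_scaled_Nil)
  next
    case (Cons a w)
    have odd: "coeff (?S' True L) w - coeff (?S True L) w - inverse q * coeff (?F' 1 L) w + q * coeff (?F 1 L) w
        = (q - inverse q) * coeff (?N True L) w"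
      and even: "coeff (?S' False L) w - coeff (?S False L) w = (q - inverse q) * coeff (?N False L) w" for L
      using Cons.IH by auto
    show ?case
    proof (intro allI)
      fix L
      show "coeff (?S' True L) (a # w) - coeff (?S True L) (a # w) - inverse q * coeff (?F' 1 L) (a # w)
          + q * coeff (?F 1 L) (a # w) = (q - inverse q) * coeff (?N True L) (a # w)
        \<and> coeff (?S' False L) (a # w) - coeff (?S False L) (a # w) = (q - inverse q) * coeff (?N False L) (a # w)"
      proof (cases L)
        case (Suc L')
        show ?thesis
        proof (cases a)
          case X
          have "coeff (?F 1 (Suc L')) (X # w) = coeff (?T 1 L') w - q * qnat q 2 * coeff (?F 2 L') w"
            and "coeff (?F' 1 (Suc L')) (X # w) = coeff (?T' 1 L') w - inverse q * qnat q 2 * coeff (?F' 2 L') w"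
            using coeff_alt_paths_Cons(1)[of 1 q _ L' w] by (simp_all add: numeral_2_eq_2)
          then have "coeff (?S' True (Suc L')) (X # w) - coeff (?S True (Suc L')) (X # w)
              - inverse q * coeff (?F' 1 (Suc L')) (X # w) + q * coeff (?F 1 (Suc L')) (X # w) = 0"
            unfolding coeff_alt_excursions_Cons using shift1[of L' w] mixed1[of L' w] d2 r by algebra
          moreover have "coeff (?S' False (Suc L')) (X # w) - coeff (?S False (Suc L')) (X # w)
              = (q - inverse q) * coeff (?N False (Suc L')) (X # w)"
            unfolding coeff_alt_excursions_Cons coeff_alt_scaled_Cons using odd[of L'] by (simp add: algebra_simps)
          ultimately show ?thesis
            unfolding Suc X by (simp add: coeff_alt_scaled_Cons)
        next
          case Y
          show ?thesis
            unfolding Suc Y coeff_alt_excursions_Cons coeff_alt_scaled_Cons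
            using even[of L'] coeff_alt_paths_Cons(3)[of 1 q _ L' w] by (simp add: algebra_simps)
        qed
      qed (simp add: coeff_Cons_degree_0)
    qed
  qed
  then show ?thesis
    by (auto intro!: poly_mapping_eqI simp: lookup_minus)
qed

lemma alt_excursions_double:
  assumes "q - inverse q \<noteq> 0"
  shows "alt_excursions q lam False (2 * n)
    = (\<Sum>m<n. scal (lam ^ (n - m)) (star q (Gt m) (xCy q (n - m - 1))))"
proof -
  let ?F = "\<lambda>l. star q (alt False l) (excursions q lam (2 * n - l))"
  have "alt_excursions q lam False (2 * n) = (\<Sum>l\<le>2 * n. ?F l)"
    by (simp add: alt_excursions_def conv_def)
  also have "\<dots> = (\<Sum>l\<in>(\<lambda>m. 2 * m) ` {..<n}. ?F l)"
  proof (rule sum.mono_neutral_right)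
    show "\<forall>l\<in>{..2 * n} - (\<lambda>m. 2 * m) ` {..<n}. ?F l = 0"
    proof
      fix l
      assume l: "l \<in> {..2 * n} - (\<lambda>m. 2 * m) ` {..<n}"
      show "?F l = 0"
      proof (cases "even l")
        case True
        with l have "l = 2 * n"
          by (auto elim!: evenE)
        then show ?thesis
          by (simp add: excursions_0)
      qed (simp add: alt_def)
    qed
  qed auto
  also have "\<dots> = (\<Sum>m<n. ?F (2 * m))"
    by (subst sum.reindex) (auto simp: inj_on_def)
  also have "\<dots> = (\<Sum>m<n. scal (lam ^ (n - m)) (star q (Gt m) (xCy q (n - m - 1))))"
  proof (rule sum.cong)
    fix m
    assume "m \<in> {..<n}"
    then have "2 * n - 2 * m = 2 * (n - m)" "n - m \<ge> 1"
      by auto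
    then show "?F (2 * m) = scal (lam ^ (n - m)) (star q (Gt m) (xCy q (n - m - 1)))"
      by (simp add: alt_False_double excursions_double[OF assms] star_scal_right)
  qed simp
  finally show ?thesis .
qed

lemma alt_scaled_double: "alt_scaled False (2 * n) = scal (of_nat n) (Gt n)"
  by (simp add: alt_scaled_def alt_False_double)

theorem Gt_xCy_identity:
  fixes q :: "'a::field"
  assumes "q \<noteq> 0" "q - inverse q \<noteq> 0" and "\<And>n. n \<ge> 1 \<Longrightarrow> qnat q n \<noteq> 0"
  shows "(\<Sum>m<n. scal ((- inverse q) ^ (n - m) - (-q) ^ (n - m)) (star q (Gt m) (xCy q (n - m - 1))))
    = scal ((q - inverse q) * of_nat n) (Gt n)"
  using alt_excursions_difference[OF assms, of "2 * n"]
  by (simp add: alt_excursions_double[OF assms(2)] alt_scaled_double scal_diff_left sum_subtractf)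

section \<open>Homogeneous polynomials in the \<open>q\<close>-shuffle algebra\<close>

lemma finite_compositions: "finite (compositions n)"
proof -
  have "length ks \<le> sum_list ks" if "\<forall>k\<in>set ks. 0 < k" for ks :: "nat list"
    using that by (induction ks) auto
  then have "compositions n \<subseteq> {ks. set ks \<subseteq> {..n} \<and> length ks \<le> n}"
    by (auto simp: compositions_def member_le_sum_list)
  moreover have "finite {ks. set ks \<subseteq> {..n} \<and> length ks \<le> n}"
    by (rule finite_lists_length_le) simp
  ultimately show ?thesis
    by (rule finite_subset)
qed

definition hom_poly :: "'a::field \<Rightarrow> (nat \<Rightarrow> 'a vec) \<Rightarrow> nat \<Rightarrow> 'a vec \<Rightarrow> bool" where
  "hom_poly q gen n f \<longleftrightarrow> (\<exists>c. f = (\<Sum>ks\<in>compositions n. scal (c ks) (star_list q (map gen ks))))"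

lemma hom_poly_zero: "hom_poly q gen n 0"
  unfolding hom_poly_def by (rule exI[of _ "\<lambda>_. 0"]) simp

lemma hom_poly_add: "hom_poly q gen n f \<Longrightarrow> hom_poly q gen n g \<Longrightarrow> hom_poly q gen n (f + g)"
  unfolding hom_poly_def
  by (elim exE, rule_tac x = "\<lambda>ks. c ks + ca ks" in exI) (simp add: scal_add_left sum.distrib)

lemma hom_poly_scal: "hom_poly q gen n f \<Longrightarrow> hom_poly q gen n (scal a f)"
  unfolding hom_poly_def
  by (elim exE, rule_tac x = "\<lambda>ks. a * c ks" in exI) (simp add: scal_sum)

lemma hom_poly_diff: "hom_poly q gen n f \<Longrightarrow> hom_poly q gen n g \<Longrightarrow> hom_poly q gen n (f - g)"
  unfolding minus_eq_plus_scal by (intro hom_poly_add hom_poly_scal)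

lemma hom_poly_sum:
  "finite A \<Longrightarrow> (\<And>i. i \<in> A \<Longrightarrow> hom_poly q gen n (F i)) \<Longrightarrow> hom_poly q gen n (\<Sum>i\<in>A. F i)"
  by (induction A rule: finite_induct) (auto intro: hom_poly_zero hom_poly_add)

lemma hom_poly_monomial:
  assumes "ks \<in> compositions n"
  shows "hom_poly q gen n (star_list q (map gen ks))"
proof -
  have "(\<Sum>ls\<in>compositions n. scal (if ls = ks then 1 else 0) (star_list q (map gen ls)))
      = star_list q (map gen ks)"
    using assms finite_compositions by (simp add: if_distrib[of "\<lambda>c. scal c _"] sum.delta' cong: if_cong)
  then show ?thesis
    unfolding hom_poly_def by metis
qed

lemma hom_poly_gen: "n \<ge> 1 \<Longrightarrow> hom_poly q gen n (gen n)"
  using hom_poly_monomial[of "[n]" n q gen] by (simp add: compositions_def star_list_def)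

lemma star_star_list: "q \<noteq> 0 \<Longrightarrow> star q (star_list q fs) (star_list q gs) = star_list q (fs @ gs)"
  by (induction fs) (simp_all add: star_list_def star_assoc)

lemma hom_poly_star:
  assumes "q \<noteq> 0" and "hom_poly q gen m f" and "hom_poly q gen n g"
  shows "hom_poly q gen (m + n) (star q f g)"
proof -
  obtain c d where
    f: "f = (\<Sum>ks\<in>compositions m. scal (c ks) (star_list q (map gen ks)))" and
    g: "g = (\<Sum>ls\<in>compositions n. scal (d ls) (star_list q (map gen ls)))"
    using assms(2,3) unfolding hom_poly_def by blast
  have "star q f g = (\<Sum>ks\<in>compositions m. scal (c ks) (star q (star_list q (map gen ks)) g))"
    by (simp add: f star_sum_left finite_compositions star_scal_left)
  also have "\<dots> = (\<Sum>ks\<in>compositions m. \<Sum>ls\<in>compositions n.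
      scal (c ks * d ls) (star_list q (map gen (ks @ ls))))"
    by (simp add: g star_sum_right finite_compositions star_scal_right scal_sum star_star_list[OF assms(1)])
  also have "hom_poly q gen (m + n) \<dots>"
    by (intro hom_poly_sum hom_poly_scal hom_poly_monomial finite_compositions)
      (auto simp: compositions_def)
  finally show ?thesis .
qed

lemma hom_poly_triangular:
  assumes q: "q \<noteq> 0"
    and rel: "\<And>k. k \<ge> 1 \<Longrightarrow> scal (\<alpha> k) (B k)
      + (\<Sum>m\<in>{1..<k}. scal (\<mu> k m) (star q (A m) (B (k - m)))) = scal (\<beta> k) (A k)"
    and \<alpha>: "\<And>k. k \<ge> 1 \<Longrightarrow> \<alpha> k \<noteq> 0" and \<beta>: "\<And>k. k \<ge> 1 \<Longrightarrow> \<beta> k \<noteq> 0"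
    and "k \<ge> 1"
  shows "hom_poly q A k (B k) \<and> hom_poly q B k (A k)"
  using \<open>k \<ge> 1\<close>
proof (induction k rule: less_induct)
  case (less k)
  let ?R = "\<Sum>m\<in>{1..<k}. scal (\<mu> k m) (star q (A m) (B (k - m)))"
  have R: "hom_poly q A k ?R \<and> hom_poly q B k ?R"
  proof (intro conjI hom_poly_sum hom_poly_scal finite_atLeastLessThan)
    fix m
    assume "m \<in> {1..<k}"
    then have m: "1 \<le> m" "1 \<le> k - m" "k - m < k" "m < k" and k: "m + (k - m) = k"
      by auto
    show "hom_poly q A k (star q (A m) (B (k - m)))"
      using hom_poly_star[OF q hom_poly_gen[OF m(1)] conjunct1[OF less.IH[OF m(3,2)]]] k by simp
    show "hom_poly q B k (star q (A m) (B (k - m)))"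
      using hom_poly_star[OF q conjunct2[OF less.IH[OF m(4,1)]] hom_poly_gen[OF m(2)]] k by simp
  qed
  have "B k = scal (inverse (\<alpha> k)) (scal (\<alpha> k) (B k))"
    using \<alpha>[OF less.prems] by simp
  also have "scal (\<alpha> k) (B k) = scal (\<beta> k) (A k) - ?R"
    using rel[OF less.prems] by (simp add: eq_diff_eq)
  finally have B: "B k = scal (inverse (\<alpha> k)) (scal (\<beta> k) (A k) - ?R)" .
  have "A k = scal (inverse (\<beta> k)) (scal (\<beta> k) (A k))"
    using \<beta>[OF less.prems] by simp
  also have "scal (\<beta> k) (A k) = scal (\<alpha> k) (B k) + ?R"
    using rel[OF less.prems] by simp
  finally have A: "A k = scal (inverse (\<beta> k)) (scal (\<alpha> k) (B k) + ?R)" .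
  show ?case
  proof
    show "hom_poly q A k (B k)"
      by (subst B) (intro hom_poly_scal hom_poly_diff hom_poly_gen less.prems conjunct1[OF R])
    show "hom_poly q B k (A k)"
      by (subst A) (intro hom_poly_scal hom_poly_add hom_poly_gen less.prems conjunct2[OF R])
  qed
qed

lemma q_minus_inverse_nonzero:
  fixes q :: "'a::field"
  assumes "q \<noteq> 0" and "q ^ 2 \<noteq> 1"
  shows "q - inverse q \<noteq> 0"
  using assms by (simp add: power2_eq_square field_simps)

lemma qnat_nonzero:
  fixes q :: "'a::field"
  assumes "q \<noteq> 0" and "q - inverse q \<noteq> 0" and "q ^ (2 * n) \<noteq> 1"
  shows "qnat q n \<noteq> 0"
proof
  assume "qnat q n = 0"
  then have "q ^ n * q ^ n = inverse q ^ n * q ^ n"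
    using assms(2) by (simp add: qnat_eq)
  with assms(1,3) show False
    by (simp add: power_add[symmetric] mult_2 flip: power_mult_distrib)
qed

lemma neg_power_diff_nonzero:
  fixes q :: "'a::field"
  assumes "q \<noteq> 0" and "q ^ (2 * n) \<noteq> 1"
  shows "(- inverse q) ^ n - (- q) ^ n \<noteq> 0"
proof
  assume "(- inverse q) ^ n - (- q) ^ n = 0"
  then have "(- inverse q) ^ n * (- q) ^ n = (- q) ^ n * (- q) ^ n"
    by simp
  with assms show False
    by (simp add: power_add[symmetric] mult_2 power_mult_distrib[symmetric])
qed

theorem corollary9p12:
  fixes q :: "'a::field_char_0" and n :: nat
  assumes "q \<noteq> 0" and "\<forall>m::nat. m > 0 \<longrightarrow> q ^ m \<noteq> 1" and "1 \<le> n"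
  shows "(\<exists>c :: nat list \<Rightarrow> 'a. xCy q (n - 1) =
            (\<Sum>ks\<in>compositions n. scal (c ks) (star_list q (map Gt ks))))
       \<and> (\<exists>c :: nat list \<Rightarrow> 'a. Gt n =
            (\<Sum>ks\<in>compositions n. scal (c ks) (star_list q (map (\<lambda>k. xCy q (k - 1)) ks))))"
proof -
  have q2: "q ^ (2 * k) \<noteq> 1" if "k \<ge> 1" for k
    using assms(2) that by simp
  have qq: "q - inverse q \<noteq> 0"
    using q_minus_inverse_nonzero[OF assms(1)] q2[of 1] by simp
  have nz: "qnat q k \<noteq> 0" if "k \<ge> 1" for k
    using qnat_nonzero[OF assms(1) qq q2[OF that]] .
  define \<mu> where "\<mu> j = (- inverse q) ^ j - (- q) ^ j" for j
  have "scal (\<mu> k) (xCy q (k - 1)) + (\<Sum>m\<in>{1..<k}. scal (\<mu> (k - m)) (star q (Gt m) (xCy q (k - m - 1))))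
      = scal ((q - inverse q) * of_nat k) (Gt k)" if "k \<ge> 1" for k
  proof -
    have "{..<k} = insert 0 {1..<k}"
      using that by auto
    then show ?thesis
      using Gt_xCy_identity[OF assms(1) qq nz, of k] by (simp add: \<mu>_def Gt_def)
  qed
  moreover have "\<mu> k \<noteq> 0" "(q - inverse q) * of_nat k \<noteq> 0" if "k \<ge> 1" for k
    using neg_power_diff_nonzero[OF assms(1) q2[OF that]] qq that by (simp_all add: \<mu>_def)
  ultimately have "hom_poly q Gt n (xCy q (n - 1)) \<and> hom_poly q (\<lambda>k. xCy q (k - 1)) n (Gt n)"
    by (rule hom_poly_triangular[where \<alpha> = \<mu> and \<mu> = "\<lambda>k m. \<mu> (k - m)"
          and \<beta> = "\<lambda>k. (q - inverse q) * of_nat k", OF assms(1) _ _ _ assms(3)])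
  then show ?thesis
    by (simp add: hom_poly_def)
qed

end
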